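(* Let $n\ge 4$ and $1\le s_1<s_2\le n-1$ be integers with $s_1+s_2\le n$, let $\{t_1<\cdots<t_{n-3}\}=[n-1]\setminus\{s_1,s_2\}$, and let $G=G_n\langle t_1,\ldots,t_{n-3}\rangle$. Then $G$ is perfect if and only if $(s_1+s_2)/\gcd(s_1,s_2)$ is even or $(s_1+s_2)/\gcd(s_1,s_2)=3$.
   Context: For integers $n\ge 2$, $k\ge 1$ and $1\le t_1<t_2<\cdots<t_k\le n-1$, the Toeplitz graph $G_n\langle t_1,\ldots,t_k\rangle$ is the simple graph with vertex set $[n]=\{1,\ldots,n\}$ in which two distinct vertices $i,j$ are adjacent if and only if $|i-j|\in\{t_1,\ldots,t_k\}$. A graph $G$ is perfect if $\omega(H)=\chi(H)$ for every induced subgraph $H$ of $G$ (clique number equals chromatic number). *)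

theory Defs
  imports Main
begin

definition toeplitz_adj :: "nat \<Rightarrow> nat set \<Rightarrow> nat \<Rightarrow> nat \<Rightarrow> bool" where
  "toeplitz_adj n T i j \<longleftrightarrow> i \<in> {1..n} \<and> j \<in> {1..n} \<and> i \<noteq> j \<and>
     (if i \<le> j then j - i else i - j) \<in> T"

definition is_clique :: "('a \<Rightarrow> 'a \<Rightarrow> bool) \<Rightarrow> 'a set \<Rightarrow> 'a set \<Rightarrow> bool" where
  "is_clique E S C \<longleftrightarrow> C \<subseteq> S \<and> (\<forall>x\<in>C. \<forall>y\<in>C. x \<noteq> y \<longrightarrow> E x y)"

definition clique_number :: "('a \<Rightarrow> 'a \<Rightarrow> bool) \<Rightarrow> 'a set \<Rightarrow> nat" where
  "clique_number E S = Max {card C | C. is_clique E S C}"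

definition colorable :: "('a \<Rightarrow> 'a \<Rightarrow> bool) \<Rightarrow> 'a set \<Rightarrow> nat \<Rightarrow> bool" where
  "colorable E S k \<longleftrightarrow> (\<exists>f :: 'a \<Rightarrow> nat. (\<forall>x\<in>S. f x < k) \<and>
      (\<forall>x\<in>S. \<forall>y\<in>S. E x y \<longrightarrow> f x \<noteq> f y))"

definition chromatic_number :: "('a \<Rightarrow> 'a \<Rightarrow> bool) \<Rightarrow> 'a set \<Rightarrow> nat" where
  "chromatic_number E S = (LEAST k. colorable E S k)"

definition perfect :: "('a \<Rightarrow> 'a \<Rightarrow> bool) \<Rightarrow> 'a set \<Rightarrow> bool" where
  "perfect E V \<longleftrightarrow> (\<forall>S \<subseteq> V. clique_number E S = chromatic_number E S)"

end

theory Submission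
  imports Defs
begin

(*
  On the vertex set [n] the Toeplitz graph is the complement of the distance graph H in which
  x ~ y iff |x - y| is s1 = a g or s2 = b g, where g = gcd s1 s2 and a, b are coprime.
  Cliques of the complement are independent sets of H and colourings of the complement are
  covers of the vertices by cliques of H, so perfection amounts to alpha = theta for every
  induced subgraph of H.

  If a + b is even, a and b are odd and H is bipartite (the parity of x div g alternates along
  every edge). For bipartite graphs alpha = theta is Koenig's theorem, which follows from the
  deficiency version of Hall's marriage theorem: a maximum-deficiency set of one side together
  with the vertices of the other side outside its neighbourhood is independent, and a maximum
  matching together with the unmatched vertices is a clique cover of the same size.

  If a + b = 3 then s2 = 2 s1, and greedily covering the least vertex m of an induced subgraph
  by the H-clique {m, m + g, m + 2 g} keeps m non-adjacent to everything left.

  Otherwise a + b = q is odd and at least 5, and on the progression 1, 1 + g, ..., 1 + (q - 1) g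
  the graph H is the cycle k -> k + a (mod q). Its complement has clique number below q / 2,
  but H is triangle-free, so every colour class has at most two vertices and at least q / 2
  colours are needed.
*)

section \<open>Cliques and colourings\<close>

definition graph_complement :: "('a \<Rightarrow> 'a \<Rightarrow> bool) \<Rightarrow> 'a \<Rightarrow> 'a \<Rightarrow> bool" where
  "graph_complement H x y \<longleftrightarrow> x \<noteq> y \<and> \<not> H x y"

lemma card_clique_le_colorable:
  assumes "is_clique E S C" "colorable E S k"
  shows "card C \<le> k"
proof -
  obtain f where f: "\<forall>x\<in>S. f x < k" "\<forall>x\<in>S. \<forall>y\<in>S. E x y \<longrightarrow> f x \<noteq> f y"
    using assms(2) unfolding colorable_def by blast
  have "C \<subseteq> S" "inj_on f C"
    using assms(1) f(2) unfolding is_clique_def inj_on_def by blast+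
  then have "card C = card (f ` C)" by (simp add: card_image)
  also have "\<dots> \<le> card {..<k}" using \<open>C \<subseteq> S\<close> f(1) by (intro card_mono) auto
  finally show ?thesis by simp
qed

lemma colorable_if_card_image_le:
  assumes "finite S" "card (f ` S) \<le> k" "\<forall>x\<in>S. \<forall>y\<in>S. E x y \<longrightarrow> f x \<noteq> f y"
  shows "colorable E S k"
proof -
  obtain h where h: "bij_betw h (f ` S) {..<card (f ` S)}"
    using assms(1) ex_bij_betw_finite_nat lessThan_atLeast0 by (metis finite_imageI)
  then have "\<forall>x\<in>S. h (f x) < k"
    using assms(2) bij_betwE by fastforce
  moreover have "\<forall>x\<in>S. \<forall>y\<in>S. E x y \<longrightarrow> h (f x) \<noteq> h (f y)"
    using assms(3) h unfolding bij_betw_def inj_on_def by blast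
  ultimately show ?thesis
    unfolding colorable_def by (intro exI[of _ "h \<circ> f"]) auto
qed

lemma colorable_card_if_irreflexive:
  assumes "finite S" "\<forall>x\<in>S. \<not> E x x"
  shows "colorable E S (card S)"
  using assms by (intro colorable_if_card_image_le[of S id]) auto

lemma colorable_mono: "colorable E S k \<Longrightarrow> k \<le> l \<Longrightarrow> colorable E S l"
  unfolding colorable_def using order_less_le_trans by blast

lemma colorable_chromatic_number:
  "colorable E S k \<Longrightarrow> colorable E S (chromatic_number E S)"
  unfolding chromatic_number_def by (rule LeastI)

lemma finite_clique_sizes:
  assumes "finite S"
  shows "finite {card C | C. is_clique E S C}"
proof (rule finite_subset)
  show "{card C | C. is_clique E S C} \<subseteq> {..card S}"
    using assms by (auto simp: is_clique_def intro: card_mono)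
qed simp

lemma clique_number_attained:
  assumes "finite S"
  shows "\<exists>C. is_clique E S C \<and> clique_number E S = card C"
proof -
  have "is_clique E S {}" unfolding is_clique_def by simp
  then show ?thesis
    unfolding clique_number_def using Max_in[OF finite_clique_sizes[OF assms]] by fastforce
qed

lemma card_clique_le_clique_number:
  assumes "finite S" "is_clique E S C"
  shows "card C \<le> clique_number E S"
  unfolding clique_number_def using assms(2) by (intro Max_ge finite_clique_sizes[OF assms(1)]) auto

lemma clique_number_eq_chromatic_number:
  assumes "finite S" "is_clique E S C" "colorable E S (card C)"
  shows "clique_number E S = chromatic_number E S"
proof -
  obtain C' where "is_clique E S C'" "clique_number E S = card C'"
    using clique_number_attained[OF assms(1)] by blast
  then have "clique_number E S \<le> chromatic_number E S"
    using card_clique_le_colorable colorable_chromatic_number[OF assms(3)] by metis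
  moreover have "chromatic_number E S \<le> card C"
    unfolding chromatic_number_def using assms(3) by (rule Least_le)
  ultimately show ?thesis
    using card_clique_le_clique_number[OF assms(1,2)] by linarith
qed

lemma perfect_if_clique_colorable:
  assumes "finite V" "\<And>S. S \<subseteq> V \<Longrightarrow> \<exists>C. is_clique E S C \<and> colorable E S (card C)"
  shows "perfect E V"
  unfolding perfect_def
  using assms clique_number_eq_chromatic_number finite_subset by metis

lemma perfect_cong:
  assumes "\<forall>x\<in>V. \<forall>y\<in>V. E x y \<longleftrightarrow> E' x y"
  shows "perfect E V \<longleftrightarrow> perfect E' V"
proof -
  have "is_clique E S = is_clique E' S" "colorable E S = colorable E' S" if "S \<subseteq> V" for S
    using that assms unfolding is_clique_def colorable_def by (fastforce intro!: ext)+
  then show ?thesis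
    unfolding perfect_def clique_number_def chromatic_number_def by simp
qed

lemma card_le_mult_if_colorable:
  assumes "finite S" "colorable E S k"
    and "\<And>V. V \<subseteq> S \<Longrightarrow> \<forall>x\<in>V. \<forall>y\<in>V. \<not> E x y \<Longrightarrow> card V \<le> m"
  shows "card S \<le> k * m"
proof -
  obtain f where f: "\<forall>x\<in>S. f x < k" "\<forall>x\<in>S. \<forall>y\<in>S. E x y \<longrightarrow> f x \<noteq> f y"
    using assms(2) unfolding colorable_def by blast
  have "card S \<le> card (\<Union>i<k. {x\<in>S. f x = i})"
    using assms(1) f(1) by (intro card_mono) auto
  also have "\<dots> \<le> (\<Sum>i<k. card {x\<in>S. f x = i})"
    by (rule card_UN_le) simp
  also have "\<dots> \<le> (\<Sum>i<k. m)"
    using f(2) by (intro sum_mono assms(3)) fastforce+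
  finally show ?thesis by simp
qed

section \<open>Hall's marriage theorem and the Koenig--Ore formula\<close>

definition hall_condition :: "('i \<Rightarrow> 'a set) \<Rightarrow> 'i set \<Rightarrow> bool" where
  "hall_condition A I \<longleftrightarrow> (\<forall>J\<subseteq>I. card J \<le> card (\<Union>(A ` J)))"

definition is_sdr :: "('i \<Rightarrow> 'a set) \<Rightarrow> 'i set \<Rightarrow> ('i \<Rightarrow> 'a) \<Rightarrow> bool" where
  "is_sdr A I r \<longleftrightarrow> inj_on r I \<and> (\<forall>i\<in>I. r i \<in> A i)"

lemma hall_condition_subset: "hall_condition A I \<Longrightarrow> J \<subseteq> I \<Longrightarrow> hall_condition A J"
  unfolding hall_condition_def by blast

lemma hall_condition_Diff_critical:
  assumes "finite I" "\<forall>i\<in>I. finite (A i)" "hall_condition A I"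
    and "J \<subseteq> I" "card J = card (\<Union>(A ` J))"
  shows "hall_condition (\<lambda>i. A i - \<Union>(A ` J)) (I - J)"
  unfolding hall_condition_def
proof (intro allI impI)
  fix K assume K: "K \<subseteq> I - J"
  let ?U = "\<Union>(A ` J)" and ?V = "\<Union>((\<lambda>i. A i - \<Union>(A ` J)) ` K)"
  have "finite J" "finite K"
    using K assms(1,4) finite_subset by blast+
  then have fin: "finite K" "finite J" "finite ?U" "finite ?V"
    using K assms(2,4) by auto
  have "card K + card J = card (K \<union> J)"
    using K fin by (intro card_Un_disjoint[symmetric]) auto
  also have "\<dots> \<le> card (\<Union>(A ` (K \<union> J)))"
    using K assms(3,4) unfolding hall_condition_def by blast
  also have "\<Union>(A ` (K \<union> J)) = ?V \<union> ?U" by auto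
  also have "card (?V \<union> ?U) = card ?V + card J"
    using fin assms(5) by (subst card_Un_disjoint) auto
  finally show "card K \<le> card ?V" by simp
qed

lemma hall_condition_Diff_point:
  assumes "finite I" "i0 \<in> I"
    and strict: "\<forall>J\<subseteq>I. J \<noteq> {} \<longrightarrow> J \<noteq> I \<longrightarrow> card J < card (\<Union>(A ` J))"
  shows "hall_condition (\<lambda>i. A i - {x}) (I - {i0})"
  unfolding hall_condition_def
proof (intro allI impI)
  fix K assume K: "K \<subseteq> I - {i0}"
  show "card K \<le> card (\<Union>((\<lambda>i. A i - {x}) ` K))"
  proof (cases "K = {}")
    case False
    with K assms(2) strict have "card K < card (\<Union>(A ` K))" by blast
    moreover have "card (\<Union>(A ` K)) \<le> card (\<Union>(A ` K) - {x}) + 1"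
      using diff_card_le_card_Diff[of "{x}" "\<Union>(A ` K)"] by simp
    moreover have "\<Union>((\<lambda>i. A i - {x}) ` K) = \<Union>(A ` K) - {x}" by auto
    ultimately show ?thesis by simp
  qed simp
qed

lemma is_sdr_Un:
  assumes "is_sdr A J r1" "is_sdr (\<lambda>i. A i - \<Union>(A ` J)) K r2"
  shows "is_sdr A (J \<union> K) (\<lambda>i. if i \<in> J then r1 i else r2 i)"
proof -
  let ?r = "\<lambda>i. if i \<in> J then r1 i else r2 i"
  have "?r ` J \<subseteq> \<Union>(A ` J)" "?r ` (K - J) \<inter> \<Union>(A ` J) = {}"
    using assms unfolding is_sdr_def by auto
  moreover have "inj_on ?r J" "inj_on ?r (K - J)"
    using assms unfolding is_sdr_def inj_on_def by simp_all
  ultimately have "inj_on ?r (J \<union> (K - J))"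
    unfolding inj_on_Un by blast
  then show ?thesis
    using assms unfolding is_sdr_def by auto
qed

lemma is_sdr_fun_upd:
  assumes "is_sdr (\<lambda>i. A i - {x}) (I - {i0}) r" "x \<in> A i0" "i0 \<in> I"
  shows "is_sdr A I (r(i0 := x))"
  using assms unfolding is_sdr_def inj_on_def by auto

theorem hall_marriage:
  assumes "finite I" "\<forall>i\<in>I. finite (A i)" "hall_condition A I"
  shows "\<exists>r. is_sdr A I r"
  using assms
proof (induction "card I" arbitrary: I A rule: less_induct)
  case less
  note fin = less.prems(1) and finA = less.prems(2) and hall = less.prems(3)
  show ?case
  proof (cases "\<exists>J\<subseteq>I. J \<noteq> {} \<and> J \<noteq> I \<and> card J = card (\<Union>(A ` J))")
    case True
    then obtain J where critical: "J \<subseteq> I" "J \<noteq> {}" "J \<noteq> I" "card J = card (\<Union>(A ` J))"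
      by blast
    have J: "finite J" "\<forall>i\<in>J. finite (A i)" "hall_condition A J"
      using critical(1) fin finA hall finite_subset hall_condition_subset by blast+
    have "J \<subset> I" "I - J \<subset> I" using critical(1-3) by blast+
    then have "card J < card I" "card (I - J) < card I"
      using fin by (simp_all add: psubset_card_mono)
    then obtain r1 where "is_sdr A J r1"
      using less.hyps[OF _ J] by blast
    have "finite (I - J)" "\<forall>i\<in>I - J. finite (A i - \<Union>(A ` J))"
      using fin finA by auto
    then obtain r2 where "is_sdr (\<lambda>i. A i - \<Union>(A ` J)) (I - J) r2"
      using less.hyps[OF \<open>card (I - J) < card I\<close> _ _
          hall_condition_Diff_critical[OF fin finA hall critical(1,4)]]
      by blast
    then have "is_sdr A (J \<union> (I - J)) (\<lambda>i. if i \<in> J then r1 i else r2 i)"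
      by (rule is_sdr_Un[OF \<open>is_sdr A J r1\<close>])
    then show ?thesis
      using critical(1) by (metis Un_Diff_cancel sup.absorb2)
  next
    case no_critical: False
    show ?thesis
    proof (cases "I = {}")
      case True
      then show ?thesis unfolding is_sdr_def by simp
    next
      case False
      then obtain i0 where "i0 \<in> I" by blast
      have strict: "\<forall>J\<subseteq>I. J \<noteq> {} \<longrightarrow> J \<noteq> I \<longrightarrow> card J < card (\<Union>(A ` J))"
        using no_critical hall unfolding hall_condition_def by (metis le_neq_implies_less)
      have "card {i0} \<le> card (\<Union>(A ` {i0}))"
        using hall \<open>i0 \<in> I\<close> unfolding hall_condition_def by blast
      then obtain x where x: "x \<in> A i0" by fastforce
      have "card (I - {i0}) < card I"
        using fin \<open>i0 \<in> I\<close> by (rule card_Diff1_less)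
      moreover have "finite (I - {i0})" "\<forall>i\<in>I - {i0}. finite (A i - {x})"
        using fin finA by auto
      ultimately obtain r2 where "is_sdr (\<lambda>i. A i - {x}) (I - {i0}) r2"
        using less.hyps[OF _ _ _ hall_condition_Diff_point[OF fin \<open>i0 \<in> I\<close> strict]] by blast
      then have "is_sdr A I (r2(i0 := x))"
        using x \<open>i0 \<in> I\<close> by (rule is_sdr_fun_upd)
      then show ?thesis by blast
    qed
  qed
qed

lemma hall_condition_padded:
  assumes "finite I" "\<forall>i\<in>I. finite (A i)" "\<forall>J\<subseteq>I. card J \<le> card (\<Union>(A ` J)) + d"
  shows "hall_condition (\<lambda>i. Inl ` A i \<union> Inr ` {..<d}) I"
  unfolding hall_condition_def
proof (intro allI impI)
  fix J assume J: "J \<subseteq> I"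
  show "card J \<le> card (\<Union>i\<in>J. Inl ` A i \<union> Inr ` {..<d})"
  proof (cases "J = {}")
    case False
    then have split: "(\<Union>i\<in>J. Inl ` A i \<union> Inr ` {..<d}) = Inl ` \<Union>(A ` J) \<union> Inr ` {..<d}"
      by auto
    have "finite (\<Union>(A ` J))"
      using J assms(1,2) finite_subset by blast
    then have "card (\<Union>i\<in>J. Inl ` A i \<union> Inr ` {..<d}) = card (\<Union>(A ` J)) + d"
      unfolding split by (subst card_Un_disjoint) (auto simp: card_image)
    then show ?thesis using assms(3) J by simp
  qed simp
qed

lemma hall_deficiency:
  assumes "finite I" "\<forall>i\<in>I. finite (A i)" "\<forall>J\<subseteq>I. card J \<le> card (\<Union>(A ` J)) + d"
  shows "\<exists>J0\<subseteq>I. card I \<le> card J0 + d \<and> (\<exists>r. is_sdr A J0 r)"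
proof -
  define A' :: "'a \<Rightarrow> ('b + nat) set" where "A' i = Inl ` A i \<union> Inr ` {..<d}" for i
  have hall: "hall_condition A' I"
    unfolding A'_def using hall_condition_padded[OF assms] .
  have "\<forall>i\<in>I. finite (A' i)" using assms(2) unfolding A'_def by simp
  then obtain r' where r': "is_sdr A' I r'"
    using hall_marriage[OF assms(1) _ hall] by blast
  define J0 where "J0 = {i\<in>I. r' i \<in> range Inl}"
  have "J0 \<subseteq> I" unfolding J0_def by blast
  have J0: "r' i = Inl (projl (r' i))" "projl (r' i) \<in> A i" if "i \<in> J0" for i
    using r' that unfolding is_sdr_def J0_def A'_def by auto
  have "inj_on (projl \<circ> r') J0"
  proof (rule inj_onI)
    fix i j assume "i \<in> J0" "j \<in> J0" "(projl \<circ> r') i = (projl \<circ> r') j"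
    then have "r' i = r' j" using J0(1) by (metis comp_apply)
    then show "i = j"
      using r' \<open>i \<in> J0\<close> \<open>j \<in> J0\<close> \<open>J0 \<subseteq> I\<close> unfolding is_sdr_def inj_on_def by blast
  qed
  then have sdr: "is_sdr A J0 (projl \<circ> r')"
    using J0(2) unfolding is_sdr_def by simp
  have "r' ` (I - J0) \<subseteq> Inr ` {..<d}"
    using r' unfolding is_sdr_def J0_def A'_def by auto
  have "card I - card J0 = card (I - J0)"
    using assms(1) \<open>J0 \<subseteq> I\<close> by (metis card_Diff_subset finite_subset)
  also have "\<dots> = card (r' ` (I - J0))"
    using r' unfolding is_sdr_def by (metis Diff_subset card_image inj_on_subset)
  also have "\<dots> \<le> card (Inr ` {..<d} :: ('b + nat) set)"
    using \<open>r' ` (I - J0) \<subseteq> Inr ` {..<d}\<close> by (intro card_mono) auto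
  also have "\<dots> = d" by (simp add: card_image)
  finally have "card I \<le> card J0 + d" by linarith
  then show ?thesis
    using sdr \<open>J0 \<subseteq> I\<close> by blast
qed

theorem koenig_ore:
  assumes "finite I" "\<forall>i\<in>I. finite (A i)"
  shows "\<exists>Js\<subseteq>I. \<exists>J0\<subseteq>I. (\<exists>r. is_sdr A J0 r) \<and> card I + card (\<Union>(A ` Js)) \<le> card J0 + card Js"
proof -
  let ?surplus = "\<lambda>J. int (card (\<Union>(A ` J))) - int (card J)"
  obtain Js where "is_arg_min ?surplus (\<lambda>J. J \<in> Pow I) Js"
    using ex_is_arg_min_if_finite[of "Pow I" ?surplus] assms(1) by blast
  then have "Js \<subseteq> I" and min: "\<And>J. J \<subseteq> I \<Longrightarrow> ?surplus Js \<le> ?surplus J"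
    unfolding is_arg_min_linorder by auto
  define d where "d = card Js - card (\<Union>(A ` Js))"
  have "card (\<Union>(A ` Js)) \<le> card Js"
    using min[of "{}"] by simp
  have "card J \<le> card (\<Union>(A ` J)) + d" if "J \<subseteq> I" for J
  proof -
    have "int (card J) \<le> int (card (\<Union>(A ` J))) + (int (card Js) - int (card (\<Union>(A ` Js))))"
      using min[OF that] by linarith
    then show ?thesis
      using \<open>card (\<Union>(A ` Js)) \<le> card Js\<close> unfolding d_def by linarith
  qed
  then obtain J0 where "J0 \<subseteq> I" "card I \<le> card J0 + d" "\<exists>r. is_sdr A J0 r"
    using hall_deficiency[OF assms, of d] by blast
  then show ?thesis
    using \<open>Js \<subseteq> I\<close> \<open>card (\<Union>(A ` Js)) \<le> card Js\<close> unfolding d_def by (intro exI[of _ Js]) auto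
qed

section \<open>Complements of bipartite graphs\<close>

lemma colorable_complement_if_matching:
  assumes "finite S" "symp H" "J0 \<subseteq> S" "is_sdr (\<lambda>x. {y\<in>S. H x y}) J0 r" "\<forall>x\<in>J0. r x \<notin> J0"
  shows "colorable (graph_complement H) S (card (S - J0))"
proof (rule colorable_if_card_image_le[OF assms(1)])
  define f where "f x = (if x \<in> J0 then r x else x)" for x
  have "f ` S \<subseteq> S - J0"
    using assms(4,5) unfolding f_def is_sdr_def by auto
  then show "card (f ` S) \<le> card (S - J0)"
    using assms(1) by (intro card_mono) auto
  show "\<forall>x\<in>S. \<forall>y\<in>S. graph_complement H x y \<longrightarrow> f x \<noteq> f y"
  proof (intro ballI impI notI)
    fix x y assume "x \<in> S" "y \<in> S" "graph_complement H x y" "f x = f y"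
    then consider "x \<in> J0" "y \<in> J0" "r x = r y" | "x \<in> J0" "r x = y" | "y \<in> J0" "r y = x"
      | "x = y"
      unfolding f_def by (auto split: if_splits)
    then have "x = y \<or> H x y"
    proof cases
      case 1
      then show ?thesis using assms(4) unfolding is_sdr_def inj_on_def by blast
    next
      case 2
      then show ?thesis using assms(4) unfolding is_sdr_def by blast
    next
      case 3
      then have "H y x" using assms(4) unfolding is_sdr_def by blast
      then show ?thesis using sympD[OF assms(2)] by blast
    qed simp
    then show False using \<open>graph_complement H x y\<close> unfolding graph_complement_def by blast
  qed
qed

lemma complement_clique_Un_non_neighbours:
  assumes "Js \<subseteq> {x\<in>S. c x}" "symp H" "\<forall>x\<in>S. \<forall>y\<in>S. H x y \<longrightarrow> c x \<noteq> c y"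
  shows "is_clique (graph_complement H) S (Js \<union> ({x\<in>S. \<not> c x} - \<Union>((\<lambda>x. {y\<in>S. H x y}) ` Js)))"
    (is "is_clique _ S ?C")
  unfolding is_clique_def
proof (intro conjI ballI impI)
  show "?C \<subseteq> S" using assms(1) by blast
  fix x y assume "x \<in> ?C" "y \<in> ?C" "x \<noteq> y"
  then have "x \<in> S" "y \<in> S" using \<open>?C \<subseteq> S\<close> by blast+
  have "c x = c y \<or> (x \<in> Js \<and> y \<in> ?C - Js) \<or> (y \<in> Js \<and> x \<in> ?C - Js)"
    using \<open>x \<in> ?C\<close> \<open>y \<in> ?C\<close> assms(1) by blast
  moreover have "\<not> H u v" if "u \<in> Js" "v \<in> ?C - Js" for u v
    using that assms(1) by blast
  ultimately have "\<not> H x y"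
    using assms(3) \<open>x \<in> S\<close> \<open>y \<in> S\<close> sympD[OF assms(2), of x y] by blast
  then show "graph_complement H x y"
    using \<open>x \<noteq> y\<close> unfolding graph_complement_def by blast
qed

theorem bipartite_complement_clique_colorable:
  fixes c :: "'a \<Rightarrow> bool"
  assumes "finite S" "symp H" "\<forall>x\<in>S. \<forall>y\<in>S. H x y \<longrightarrow> c x \<noteq> c y"
  shows "\<exists>C. is_clique (graph_complement H) S C \<and> colorable (graph_complement H) S (card C)"
proof -
  define X where "X = {x\<in>S. c x}"
  define Y where "Y = {x\<in>S. \<not> c x}"
  define A where "A x = {y\<in>S. H x y}" for x
  have "finite X" "finite Y" "\<forall>x\<in>X. finite (A x)"
    using assms(1) unfolding X_def Y_def A_def by auto
  have A_Y: "A x \<subseteq> Y" if "x \<in> X" for x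
    using that assms(3) unfolding X_def Y_def A_def by auto
  obtain Js J0 r where Js: "Js \<subseteq> X" and J0: "J0 \<subseteq> X" "is_sdr A J0 r"
    and deficiency: "card X + card (\<Union>(A ` Js)) \<le> card J0 + card Js"
    using koenig_ore[OF \<open>finite X\<close> \<open>\<forall>x\<in>X. finite (A x)\<close>] by blast
  define C where "C = Js \<union> (Y - \<Union>(A ` Js))"
  have "is_clique (graph_complement H) S C"
    unfolding C_def Y_def A_def using Js assms(2,3) unfolding X_def
    by (rule complement_clique_Un_non_neighbours)
  have "\<Union>(A ` Js) \<subseteq> Y" "finite Js" "finite J0"
    using Js J0(1) A_Y \<open>finite X\<close> finite_subset by blast+
  have "S = X \<union> Y" "X \<inter> Y = {}" unfolding X_def Y_def by auto
  have "J0 \<subseteq> S" using J0(1) \<open>S = X \<union> Y\<close> by blast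
  have "card C = card Js + card (Y - \<Union>(A ` Js))"
    unfolding C_def using Js \<open>X \<inter> Y = {}\<close> \<open>finite Js\<close> \<open>finite Y\<close>
    by (intro card_Un_disjoint) auto
  also have "card (Y - \<Union>(A ` Js)) = card Y - card (\<Union>(A ` Js))"
    using \<open>\<Union>(A ` Js) \<subseteq> Y\<close> \<open>finite Y\<close> by (meson card_Diff_subset finite_subset)
  moreover have "card (S - J0) = card X + card Y - card J0"
    using card_Diff_subset[OF \<open>finite J0\<close> \<open>J0 \<subseteq> S\<close>] card_Un_disjoint[OF \<open>finite X\<close> \<open>finite Y\<close>]
      \<open>S = X \<union> Y\<close> \<open>X \<inter> Y = {}\<close> by simp
  ultimately have "card (S - J0) \<le> card C"
    using deficiency card_mono[OF \<open>finite Y\<close> \<open>\<Union>(A ` Js) \<subseteq> Y\<close>] card_mono[OF \<open>finite X\<close> J0(1)]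
    by linarith
  moreover have "colorable (graph_complement H) S (card (S - J0))"
  proof (rule colorable_complement_if_matching[OF assms(1,2)])
    show "J0 \<subseteq> S" by fact
    show "is_sdr (\<lambda>x. {y\<in>S. H x y}) J0 r"
      using J0(2) unfolding A_def .
    show "\<forall>x\<in>J0. r x \<notin> J0"
      using J0 A_Y \<open>X \<inter> Y = {}\<close> unfolding is_sdr_def by blast
  qed
  ultimately have "colorable (graph_complement H) S (card C)"
    by (rule colorable_mono[rotated])
  then show ?thesis using \<open>is_clique (graph_complement H) S C\<close> by blast
qed

section \<open>Distance graphs\<close>

definition distance_graph :: "nat set \<Rightarrow> nat \<Rightarrow> nat \<Rightarrow> bool" where
  "distance_graph D x y \<longleftrightarrow> (if x \<le> y then y - x else x - y) \<in> D"

lemma symp_distance_graph: "symp (distance_graph D)"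
  unfolding symp_def distance_graph_def by auto

lemma toeplitz_adj_complement_eq:
  assumes "x \<in> {1..n}" "y \<in> {1..n}"
  shows "toeplitz_adj n ({1..n-1} - D) x y \<longleftrightarrow> graph_complement (distance_graph D) x y"
  using assms unfolding toeplitz_adj_def graph_complement_def distance_graph_def by auto

lemma distance_graph_odd_multiples_parity:
  assumes "g > 0" "odd a" "odd b" "distance_graph {a * g, b * g} x y"
  shows "even (x div g) \<noteq> even (y div g)"
proof -
  have shift: "even ((u + k * g) div g) \<noteq> even (u div g)" if "odd k" for u k
    using that \<open>g > 0\<close> by simp
  from assms(4) have "y = x + a * g \<or> y = x + b * g \<or> x = y + a * g \<or> x = y + b * g"
    unfolding distance_graph_def by (auto split: if_splits)
  then show ?thesis
    using shift[OF \<open>odd a\<close>] shift[OF \<open>odd b\<close>] by auto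
qed

lemma perfect_complement_distance_graph_odd_multiples:
  assumes "finite V" "g > 0" "odd a" "odd b"
  shows "perfect (graph_complement (distance_graph {a * g, b * g})) V"
proof (rule perfect_if_clique_colorable[OF assms(1)])
  fix S assume "S \<subseteq> V"
  then show "\<exists>C. is_clique (graph_complement (distance_graph {a * g, b * g})) S C \<and>
      colorable (graph_complement (distance_graph {a * g, b * g})) S (card C)"
    using assms distance_graph_odd_multiples_parity finite_subset
    by (intro bipartite_complement_clique_colorable[where c = "\<lambda>x. even (x div g)"])
      (auto simp: symp_distance_graph)
qed

lemma complement_distance_graph_g_2g_clique_colorable:
  assumes "finite S"
  shows "\<exists>C. is_clique (graph_complement (distance_graph {g, 2 * g})) S C \<and>
    colorable (graph_complement (distance_graph {g, 2 * g})) S (card C)"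
  using assms
proof (induction "card S" arbitrary: S rule: less_induct)
  case less
  let ?E = "graph_complement (distance_graph {g, 2 * g})"
  show ?case
  proof (cases "S = {}")
    case True
    then show ?thesis unfolding is_clique_def colorable_def by auto
  next
    case False
    define m where "m = Min S"
    have "m \<in> S" "\<forall>y\<in>S. m \<le> y" using False less.prems unfolding m_def by auto
    define T where "T = {m, m + g, m + 2 * g}"
    have "card (S - T) < card S"
      using \<open>m \<in> S\<close> less.prems by (intro psubset_card_mono) (auto simp: T_def)
    then obtain C' f' where C': "is_clique ?E (S - T) C'"
      and f': "\<forall>x\<in>S - T. f' x < card C'" "\<forall>x\<in>S - T. \<forall>y\<in>S - T. ?E x y \<longrightarrow> f' x \<noteq> f' y"
      using less.hyps less.prems unfolding colorable_def by blast
    have far: "?E m z" if "z \<in> S - T" for z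
      using that \<open>\<forall>y\<in>S. m \<le> y\<close> unfolding T_def graph_complement_def distance_graph_def by auto
    have "m \<notin> C'" "finite C'"
      using C' less.prems unfolding is_clique_def T_def by (auto intro: finite_subset)
    have "is_clique ?E S (insert m C')"
      using C' \<open>m \<in> S\<close> far sympD[OF symp_distance_graph]
      unfolding is_clique_def graph_complement_def by blast
    moreover have "colorable ?E S (card (insert m C'))"
      unfolding colorable_def
    proof (intro exI[of _ "\<lambda>y. if y \<in> T then 0 else Suc (f' y)"] conjI ballI impI)
      fix x y assume "x \<in> S" "y \<in> S" "?E x y"
      moreover have "\<not> ?E x y" if "x \<in> T" "y \<in> T"
        using that unfolding T_def graph_complement_def distance_graph_def by auto
      ultimately show "(if x \<in> T then 0 else Suc (f' x)) \<noteq> (if y \<in> T then 0 else Suc (f' y))"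
        using f'(2) by auto
    qed (use f'(1) \<open>m \<notin> C'\<close> \<open>finite C'\<close> in auto)
    ultimately show ?thesis by blast
  qed
qed

lemma perfect_complement_distance_graph_g_2g:
  assumes "finite V"
  shows "perfect (graph_complement (distance_graph {g, 2 * g})) V"
  using assms complement_distance_graph_g_2g_clique_colorable finite_subset
  by (metis perfect_if_clique_colorable)

lemma card_clique_distance_graph_le_2:
  assumes "finite V" "\<forall>x\<in>V. \<forall>y\<in>V. x \<noteq> y \<longrightarrow> distance_graph {s1, s2} x y"
    and "0 < s1" "s1 < s2" "s2 \<noteq> 2 * s1"
  shows "card V \<le> 2"
proof (cases "V = {}")
  case False
  define m where "m = Min V"
  have "m \<in> V" "\<forall>y\<in>V. m \<le> y"
    using Min_in[OF assms(1) False] Min_le[OF assms(1)] unfolding m_def by auto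
  have "y \<in> {m, m + s1, m + s2}" if "y \<in> V" for y
  proof (cases "y = m")
    case False
    then have "distance_graph {s1, s2} m y" using assms(2) \<open>m \<in> V\<close> that by auto
    then show ?thesis using \<open>\<forall>y\<in>V. m \<le> y\<close> that unfolding distance_graph_def by auto
  qed simp
  moreover have "\<not> distance_graph {s1, s2} (m + s1) (m + s2)" "m + s1 \<noteq> m + s2"
    using assms(3-5) unfolding distance_graph_def by auto
  ultimately have "V \<subseteq> {m, m + s1} \<or> V \<subseteq> {m, m + s2}"
    using assms(2) by blast
  moreover have "card {m, m + s1} \<le> 2" "card {m, m + s2} \<le> 2"
    by (simp_all add: card_insert_if)
  ultimately show ?thesis
    by (meson card_mono finite.emptyI finite.insertI order_trans)
qed simp

lemma two_mul_card_le_if_disjoint_image: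
  assumes "finite A" "inj_on \<sigma> A" "\<sigma> ` A \<subseteq> A" "K \<subseteq> A" "\<forall>k\<in>K. \<sigma> k \<notin> K"
  shows "2 * card K \<le> card A"
proof -
  have "finite K" using assms(1,4) finite_subset by blast
  have "card K + card (\<sigma> ` K) = card (K \<union> \<sigma> ` K)"
    using \<open>finite K\<close> assms(5) by (intro card_Un_disjoint[symmetric]) auto
  also have "\<dots> \<le> card A"
    using assms(1,3,4) by (intro card_mono) auto
  finally show ?thesis
    using card_image[OF inj_on_subset[OF assms(2,4)]] by simp
qed

lemma card_clique_complement_progression:
  assumes "g > 0" "0 < a" "0 < b"
    and "is_clique (graph_complement (distance_graph {a * g, b * g})) ((\<lambda>k. c + k * g) ` {..<a + b}) C"
  shows "2 * card C \<le> a + b"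
proof -
  define p where "p k = c + k * g" for k
  define K where "K = {k \<in> {..<a + b}. p k \<in> C}"
  have "inj p" using \<open>g > 0\<close> unfolding p_def inj_def by simp
  have "C = p ` K" using assms(4) unfolding K_def is_clique_def p_def by auto
  then have "card C = card K"
    using \<open>inj p\<close> by (simp add: card_image inj_on_subset)
  \<comment> \<open>The rotation k \<mapsto> k + a (mod a + b) moves each point of the progression by a g or b g.\<close>
  define \<sigma> where "\<sigma> k = (if k < b then k + a else k - b)" for k
  have "p (\<sigma> k) \<notin> C" if "k \<in> K" for k
  proof
    assume "p (\<sigma> k) \<in> C"
    moreover have "p k \<in> C" using that unfolding K_def by blast
    moreover have "distance_graph {a * g, b * g} (p k) (p (\<sigma> k))"
      unfolding distance_graph_def p_def \<sigma>_def
      by (auto simp: algebra_simps diff_mult_distrib)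
    moreover from this have "p k \<noteq> p (\<sigma> k)"
      using assms(1-3) unfolding distance_graph_def by auto
    ultimately show False
      using assms(4) unfolding is_clique_def graph_complement_def by blast
  qed
  then have "\<forall>k\<in>K. \<sigma> k \<notin> K" unfolding K_def by blast
  moreover have "inj_on \<sigma> {..<a + b}" "\<sigma> ` {..<a + b} \<subseteq> {..<a + b}"
    unfolding inj_on_def \<sigma>_def by auto
  moreover have "K \<subseteq> {..<a + b}" unfolding K_def by blast
  ultimately have "2 * card K \<le> card {..<a + b}"
    using two_mul_card_le_if_disjoint_image[OF finite_lessThan] by blast
  then show ?thesis using \<open>card C = card K\<close> by simp
qed

lemma not_perfect_complement_distance_graph:
  assumes "g > 0" "0 < a" "a < b" "b \<noteq> 2 * a" "odd (a + b)" "(a + b) * g \<le> n"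
  shows "\<not> perfect (graph_complement (distance_graph {a * g, b * g})) {1..n}"
proof
  let ?E = "graph_complement (distance_graph {a * g, b * g})"
  define S where "S = (\<lambda>k. 1 + k * g) ` {..<a + b}"
  have "S \<subseteq> {1..n}"
  proof
    fix z assume "z \<in> S"
    then obtain k where "k < a + b" "z = 1 + k * g" unfolding S_def by blast
    then have "(k + 1) * g \<le> (a + b) * g"
      by (intro mult_le_mono1) simp
    then show "z \<in> {1..n}" using \<open>z = 1 + k * g\<close> assms(1,6) by simp
  qed
  moreover assume "perfect ?E {1..n}"
  ultimately have perfect_S: "clique_number ?E S = chromatic_number ?E S"
    unfolding perfect_def by blast
  have "finite S" "card S = a + b"
    unfolding S_def using \<open>g > 0\<close> by (auto simp: card_image inj_on_def)
  obtain C where C: "is_clique ?E S C" "clique_number ?E S = card C"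
    using clique_number_attained[OF \<open>finite S\<close>] by blast
  have "2 * card C \<le> a + b"
    using card_clique_complement_progression[OF assms(1,2) _ C(1)[unfolded S_def]] assms(3) by simp
  moreover have "2 * card C \<noteq> a + b" using \<open>odd (a + b)\<close> by (metis dvd_triv_left)
  ultimately have "2 * card C < a + b" by simp
  have "colorable ?E S (card S)"
    by (rule colorable_card_if_irreflexive[OF \<open>finite S\<close>]) (simp add: graph_complement_def)
  then have "colorable ?E S (chromatic_number ?E S)"
    by (rule colorable_chromatic_number)
  moreover have "card V \<le> 2" if "V \<subseteq> S" "\<forall>x\<in>V. \<forall>y\<in>V. \<not> ?E x y" for V
  proof (rule card_clique_distance_graph_le_2)
    show "finite V" using that(1) \<open>finite S\<close> finite_subset by blast
    show "\<forall>x\<in>V. \<forall>y\<in>V. x \<noteq> y \<longrightarrow> distance_graph {a * g, b * g} x y"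
      using that(2) unfolding graph_complement_def by blast
  qed (use assms(1-4) in auto)
  ultimately have "card S \<le> chromatic_number ?E S * 2"
    by (rule card_le_mult_if_colorable[OF \<open>finite S\<close>])
  then show False
    using \<open>2 * card C < a + b\<close> \<open>card S = a + b\<close> C(2) perfect_S by linarith
qed

lemma perfect_complement_distance_graph_iff:
  assumes "g > 0" "0 < a" "a < b" "coprime a b" "(a + b) * g \<le> n"
  shows "perfect (graph_complement (distance_graph {a * g, b * g})) {1..n} \<longleftrightarrow>
    even (a + b) \<or> a + b = 3"
proof -
  consider "even (a + b)" | "a + b = 3" | "odd (a + b)" "a + b \<noteq> 3" by blast
  then show ?thesis
  proof cases
    case 1
    have "\<not> (even a \<and> even b)"
      using coprime_common_divisor[OF \<open>coprime a b\<close>, of 2] by auto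
    with 1 have "odd a" "odd b" by auto
    then show ?thesis
      using 1 perfect_complement_distance_graph_odd_multiples[OF finite_atLeastAtMost \<open>g > 0\<close>] by simp
  next
    case 2
    then have "a = 1" "b = 2" using \<open>0 < a\<close> \<open>a < b\<close> by auto
    then show ?thesis
      using 2 perfect_complement_distance_graph_g_2g[of "{1..n}" g] by simp
  next
    case 3
    have "b \<noteq> 2 * a"
    proof
      assume "b = 2 * a"
      then have "a = 1" using \<open>coprime a b\<close> by simp
      then show False using 3 \<open>b = 2 * a\<close> by simp
    qed
    then show ?thesis
      using 3 not_perfect_complement_distance_graph[OF assms(1-3) _ _ assms(5)] by simp
  qed
qed

theorem corollary3p9:
  fixes n s1 s2 :: nat
  assumes "n \<ge> 4" and "1 \<le> s1" and "s1 < s2" and "s2 \<le> n - 1" and "s1 + s2 \<le> n"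
  shows "perfect (toeplitz_adj n ({1..n-1} - {s1, s2})) {1..n} \<longleftrightarrow>
         (even ((s1 + s2) div gcd s1 s2) \<or> (s1 + s2) div gcd s1 s2 = 3)"
proof -
  define g where "g = gcd s1 s2"
  have "g > 0" using assms(2) unfolding g_def by simp
  then obtain a b where ab: "s1 = a * g" "s2 = b * g" "coprime a b"
    using gcd_coprime_exists[of s1 s2] unfolding g_def by auto
  have "0 < a" "a < b" using ab(1,2) assms(2,3) \<open>g > 0\<close> by auto
  have "(s1 + s2) div gcd s1 s2 = a + b"
    using ab(1,2) \<open>g > 0\<close> unfolding g_def[symmetric] by (simp flip: add_mult_distrib)
  moreover have "(a + b) * g \<le> n"
    using ab(1,2) assms(5) by (simp add: add_mult_distrib)
  moreover have "perfect (toeplitz_adj n ({1..n-1} - {s1, s2})) {1..n} \<longleftrightarrow>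
      perfect (graph_complement (distance_graph {a * g, b * g})) {1..n}"
    unfolding ab(1,2) by (intro perfect_cong ballI toeplitz_adj_complement_eq)
  ultimately show ?thesis
    using perfect_complement_distance_graph_iff[OF \<open>g > 0\<close> \<open>0 < a\<close> \<open>a < b\<close> \<open>coprime a b\<close>] by simp
qed

end
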